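(* Let $H=-\frac{\hbar^2}{2}\Delta+V$ on $L^2(\mathbb R^d)$ with $V$ a smooth real potential such that all expressions below are defined. If $u(t)=u(\theta(t),q(t),p(t))$ is a McLachlan or Kramer--Saraceno solution on the frozen Gaussian manifold $\mathcal M$ (with $C^1$ parameters), then $$\dot q(t)=\frac{\hbar}{2\delta^2}p(t),\qquad \dot p(t)=-\frac\delta\hbar\langle u(t)\,|\,(\nabla V)u(t)\rangle .$$
   Context: Fix $\delta>0$, $\hbar>0$. $\mathcal M=\{u(\theta,q,p)\}$ with $u(\theta,q,p)(x)=(2\pi\delta^2)^{-d/4}\exp\big(i\theta-\frac{1}{4\delta^2}|x-2\delta q|^2+\frac i\delta p\cdot(x-\delta q)\big)$, $\theta\in\mathbb R$, $q,p\in\mathbb R^d$; $\mathcal T_u\mathcal M$ is the real span of the partial derivatives in $(\theta,q,p)$. A McLachlan (resp. Kramer--Saraceno) solution is a $C^1$ curve $u(t)\in\mathcal M\cap D(H)$ with $\dot u(t)\in\mathcal T_{u(t)}\mathcal M$ and $\mathrm{Re}\langle v|\dot u-\frac1{i\hbar}Hu\rangle=0$ (resp. $\mathrm{Im}\langle v|\dot u-\frac1{i\hbar}Hu\rangle=0$) for all $v\in\mathcal T_{u(t)}\mathcal M$. Inner products are antilinear in the first argument; $\langle u|(\nabla V)u\rangle\in\mathbb R^d$ is componentwise. *)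

theory Defs
  imports "HOL-Analysis.Analysis"
begin

text \<open>Euclidean space R^d is modelled by an arbitrary type 'a :: euclidean_space,
  d = DIM('a). Wave functions are functions 'a \<Rightarrow> complex.\<close>

definition gwp :: "real \<Rightarrow> real \<Rightarrow> 'a::euclidean_space \<Rightarrow> 'a \<Rightarrow> 'a \<Rightarrow> complex" where
  "gwp \<delta> \<theta> q p x =
     complex_of_real ((2 * pi * \<delta>\<^sup>2) powr (- real DIM('a) / 4)) *
     exp (\<i> * complex_of_real \<theta>
          - complex_of_real ((norm (x - (2 * \<delta>) *\<^sub>R q))\<^sup>2 / (4 * \<delta>\<^sup>2))
          + \<i> * complex_of_real ((p \<bullet> (x - \<delta> *\<^sub>R q)) / \<delta>))"

definition dtheta_gwp :: "real \<Rightarrow> real \<Rightarrow> 'a::euclidean_space \<Rightarrow> 'a \<Rightarrow> 'a \<Rightarrow> complex" where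
  "dtheta_gwp \<delta> \<theta> q p x = vector_derivative (\<lambda>s. gwp \<delta> (\<theta> + s) q p x) (at 0)"

definition dq_gwp :: "real \<Rightarrow> real \<Rightarrow> 'a::euclidean_space \<Rightarrow> 'a \<Rightarrow> 'a \<Rightarrow> 'a \<Rightarrow> complex" where
  "dq_gwp \<delta> \<theta> q p b x = vector_derivative (\<lambda>s. gwp \<delta> \<theta> (q + s *\<^sub>R b) p x) (at 0)"

definition dp_gwp :: "real \<Rightarrow> real \<Rightarrow> 'a::euclidean_space \<Rightarrow> 'a \<Rightarrow> 'a \<Rightarrow> 'a \<Rightarrow> complex" where
  "dp_gwp \<delta> \<theta> q p b x = vector_derivative (\<lambda>s. gwp \<delta> \<theta> q (p + s *\<^sub>R b) x) (at 0)"

definition tangent_space :: "real \<Rightarrow> real \<Rightarrow> 'a::euclidean_space \<Rightarrow> 'a \<Rightarrow> ('a \<Rightarrow> complex) set" where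
  "tangent_space \<delta> \<theta> q p =
     {f. \<exists>(c0::real) (cq::'a \<Rightarrow> real) (cp::'a \<Rightarrow> real).
           f = (\<lambda>x. complex_of_real c0 * dtheta_gwp \<delta> \<theta> q p x
                   + (\<Sum>b\<in>Basis. complex_of_real (cq b) * dq_gwp \<delta> \<theta> q p b x
                                 + complex_of_real (cp b) * dp_gwp \<delta> \<theta> q p b x))}"

definition l2_inner :: "('a::euclidean_space \<Rightarrow> complex) \<Rightarrow> ('a \<Rightarrow> complex) \<Rightarrow> complex" where
  "l2_inner f g = (LINT x|lborel. cnj (f x) * g x)"

definition dirderiv :: "'a::euclidean_space \<Rightarrow> ('a \<Rightarrow> 'b::real_normed_vector) \<Rightarrow> 'a \<Rightarrow> 'b" where
  "dirderiv b f x = vector_derivative (\<lambda>r. f (x + r *\<^sub>R b)) (at 0)"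

fun dirderivs :: "'a::euclidean_space list \<Rightarrow> ('a \<Rightarrow> 'b::real_normed_vector) \<Rightarrow> 'a \<Rightarrow> 'b" where
  "dirderivs [] f = f"
| "dirderivs (b # bs) f = dirderiv b (dirderivs bs f)"

definition smooth_fun :: "('a::euclidean_space \<Rightarrow> real) \<Rightarrow> bool" where
  "smooth_fun f \<longleftrightarrow>
     (\<forall>bs. set bs \<subseteq> Basis \<longrightarrow>
        continuous_on UNIV (dirderivs bs f) \<and>
        (\<forall>b\<in>Basis. \<forall>x. (\<lambda>r. dirderivs bs f (x + r *\<^sub>R b)) differentiable (at 0)))"

definition laplacian :: "('a::euclidean_space \<Rightarrow> complex) \<Rightarrow> 'a \<Rightarrow> complex" where
  "laplacian f x = (\<Sum>b\<in>Basis. dirderiv b (dirderiv b f) x)"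

definition hamiltonian :: "real \<Rightarrow> ('a::euclidean_space \<Rightarrow> real) \<Rightarrow> ('a \<Rightarrow> complex) \<Rightarrow> 'a \<Rightarrow> complex" where
  "hamiltonian hb V f x = - complex_of_real (hb\<^sup>2 / 2) * laplacian f x + complex_of_real (V x) * f x"

text \<open>Membership in D(H) for a smooth function: H f (computed pointwise) lies in L^2.\<close>
definition in_dom_H :: "real \<Rightarrow> ('a::euclidean_space \<Rightarrow> real) \<Rightarrow> ('a \<Rightarrow> complex) \<Rightarrow> bool" where
  "in_dom_H hb V f \<longleftrightarrow> integrable lborel (\<lambda>x. (cmod (hamiltonian hb V f x))\<^sup>2)"

definition gwp_curve :: "real \<Rightarrow> (real \<Rightarrow> real) \<Rightarrow> (real \<Rightarrow> 'a::euclidean_space) \<Rightarrow> (real \<Rightarrow> 'a) \<Rightarrow> real \<Rightarrow> 'a \<Rightarrow> complex" where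
  "gwp_curve \<delta> \<theta> q p t = gwp \<delta> (\<theta> t) (q t) (p t)"

definition time_deriv :: "(real \<Rightarrow> 'a \<Rightarrow> complex) \<Rightarrow> real \<Rightarrow> 'a \<Rightarrow> complex" where
  "time_deriv u t x = vector_derivative (\<lambda>s. u s x) (at t)"

definition McLachlan_sol :: "real \<Rightarrow> real \<Rightarrow> ('a::euclidean_space \<Rightarrow> real) \<Rightarrow> real set
     \<Rightarrow> (real \<Rightarrow> real) \<Rightarrow> (real \<Rightarrow> 'a) \<Rightarrow> (real \<Rightarrow> 'a) \<Rightarrow> bool" where
  "McLachlan_sol \<delta> hb V I \<theta> q p \<longleftrightarrow>
     (\<forall>t\<in>I. in_dom_H hb V (gwp_curve \<delta> \<theta> q p t) \<and>
        time_deriv (gwp_curve \<delta> \<theta> q p) t \<in> tangent_space \<delta> (\<theta> t) (q t) (p t) \<and>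
        (\<forall>v\<in>tangent_space \<delta> (\<theta> t) (q t) (p t).
           Re (l2_inner v (\<lambda>x. time_deriv (gwp_curve \<delta> \<theta> q p) t x
                 - hamiltonian hb V (gwp_curve \<delta> \<theta> q p t) x / (\<i> * complex_of_real hb))) = 0))"

definition KS_sol :: "real \<Rightarrow> real \<Rightarrow> ('a::euclidean_space \<Rightarrow> real) \<Rightarrow> real set
     \<Rightarrow> (real \<Rightarrow> real) \<Rightarrow> (real \<Rightarrow> 'a) \<Rightarrow> (real \<Rightarrow> 'a) \<Rightarrow> bool" where
  "KS_sol \<delta> hb V I \<theta> q p \<longleftrightarrow>
     (\<forall>t\<in>I. in_dom_H hb V (gwp_curve \<delta> \<theta> q p t) \<and>
        time_deriv (gwp_curve \<delta> \<theta> q p) t \<in> tangent_space \<delta> (\<theta> t) (q t) (p t) \<and>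
        (\<forall>v\<in>tangent_space \<delta> (\<theta> t) (q t) (p t).
           Im (l2_inner v (\<lambda>x. time_deriv (gwp_curve \<delta> \<theta> q p) t x
                 - hamiltonian hb V (gwp_curve \<delta> \<theta> q p t) x / (\<i> * complex_of_real hb))) = 0))"

end

(*
  The tangent space at u = u(theta, q, p) contains, for every A in R^d, both g_A u and i g_A u,
  where g_A x = (x - 2 delta q) . A / delta: these are combinations of the partial derivatives in
  q, p and of d_theta u = i u. Because this family is closed under multiplication by i, the
  McLachlan condition (real parts) and the Kramer--Saraceno condition (imaginary parts) both say
  that the residual r = d_t u - H u / (i hbar) is L^2-orthogonal to every g_A u.

  For a frozen Gaussian, r = W u with an explicit W whose real part is g_A0 for
  A0 = q' - hbar / (2 delta^2) p, and whose imaginary part is a quadratic polynomial plus V / hbar.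
  Testing the real part against g_A0 u gives  int g_A0^2 |u|^2 = 0, hence A0 = 0.  For the
  imaginary part, Gaussian integration by parts in direction c turns  int g_c (Im W) |u|^2 = 0
  into  int d_c (Im W) |u|^2 = 0, and evaluating the moments of |u|^2 this reads
  p' . c / delta + <u | (d_c V) u> / hbar = 0.
*)
theory Submission
  imports Defs "HOL-Probability.Distributions"
begin

section \<open>Gaussian integrals\<close>

lemma power2_norm_eq_sum_Basis: "(norm (x::'a::euclidean_space))\<^sup>2 = (\<Sum>b\<in>Basis. (x \<bullet> b)\<^sup>2)"
  by (subst power2_norm_eq_inner, subst euclidean_inner) (simp add: power2_eq_square)

lemma power2_norm_add_scaleR_diff:
  "(norm (x + r *\<^sub>R c - a))\<^sup>2 = (norm (x - a))\<^sup>2 + 2 * r * ((x - a) \<bullet> c) + r\<^sup>2 * (c \<bullet> c)"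
  unfolding power2_norm_eq_inner by (simp add: algebra_simps inner_commute power2_eq_square)

lemma nn_integral_gaussian_real:
  assumes "\<sigma> > 0"
  shows "(\<integral>\<^sup>+s. ennreal (exp (- (s - m)\<^sup>2 / \<sigma>)) \<partial>lborel) = ennreal (sqrt (pi * \<sigma>))"
proof -
  define s0 where "s0 = sqrt (\<sigma> / 2)"
  have s0: "2 * s0\<^sup>2 = \<sigma>" "0 < s0" "sqrt 2 * \<bar>s0\<bar> = sqrt \<sigma>"
    using assms by (simp_all add: s0_def real_sqrt_mult[symmetric])
  have eq: "exp (- (s - m)\<^sup>2 / \<sigma>) = sqrt (pi * \<sigma>) * normal_density m s0 s" for s
    unfolding normal_density_def s0(1)[symmetric] using assms s0 by (simp add: real_sqrt_mult)
  have "(\<integral>\<^sup>+s. ennreal (exp (- (s - m)\<^sup>2 / \<sigma>)) \<partial>lborel)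
      = (\<integral>\<^sup>+s. ennreal (sqrt (pi * \<sigma>)) * ennreal (normal_density m s0 s) \<partial>lborel)"
    by (intro nn_integral_cong) (unfold eq, rule ennreal_mult, use assms in auto)
  also have "\<dots> = ennreal (sqrt (pi * \<sigma>)) * (\<integral>\<^sup>+s. ennreal (normal_density m s0 s) \<partial>lborel)"
    by (rule nn_integral_cmult) (simp add: normal_density_def)
  also have "(\<integral>\<^sup>+s. ennreal (normal_density m s0 s) \<partial>lborel) = 1"
    using s0 by (subst nn_integral_eq_integral) auto
  finally show ?thesis by simp
qed

lemma nn_integral_gaussian:
  fixes a :: "'a::euclidean_space"
  assumes "\<sigma> > 0"
  shows "(\<integral>\<^sup>+x. ennreal (exp (- (norm (x - a))\<^sup>2 / \<sigma>)) \<partial>lborel) = ennreal (sqrt (pi * \<sigma>) ^ DIM('a))"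
proof -
  have factor: "ennreal (exp (- (norm (x - a))\<^sup>2 / \<sigma>))
      = (\<Prod>b\<in>Basis. ennreal (exp (- (x \<bullet> b - a \<bullet> b)\<^sup>2 / \<sigma>)))" for x
  proof -
    have "exp (- (norm (x - a))\<^sup>2 / \<sigma>) = exp (\<Sum>b\<in>Basis. - (x \<bullet> b - a \<bullet> b)\<^sup>2 / \<sigma>)"
      by (simp add: power2_norm_eq_sum_Basis sum_divide_distrib[symmetric] sum_negf inner_diff_left)
    also have "\<dots> = (\<Prod>b\<in>Basis. exp (- (x \<bullet> b - a \<bullet> b)\<^sup>2 / \<sigma>))" by (rule exp_sum) simp
    finally show ?thesis by (simp add: prod_ennreal)
  qed
  have "(\<integral>\<^sup>+x. ennreal (exp (- (norm (x - a))\<^sup>2 / \<sigma>)) \<partial>lborel)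
      = (\<Prod>b\<in>(Basis::'a set). (\<integral>\<^sup>+s. ennreal (exp (- (s - a \<bullet> b)\<^sup>2 / \<sigma>)) \<partial>lborel))"
    unfolding factor by (rule nn_integral_lborel_prod) auto
  also have "\<dots> = (\<Prod>b\<in>(Basis::'a set). ennreal (sqrt (pi * \<sigma>)))"
    by (intro prod.cong refl) (rule nn_integral_gaussian_real[OF assms])
  finally show ?thesis using assms by (simp add: prod_ennreal ennreal_power)
qed

lemma integrable_gaussian:
  fixes a :: "'a::euclidean_space"
  assumes "\<sigma> > 0"
  shows "integrable lborel (\<lambda>x. exp (- (norm (x - a))\<^sup>2 / \<sigma>))"
  by (rule integrableI_nn_integral_finite[OF _ _ nn_integral_gaussian[OF assms]]) auto

lemma integral_gaussian:
  fixes a :: "'a::euclidean_space"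
  assumes "\<sigma> > 0"
  shows "(\<integral>x. exp (- (norm (x - a))\<^sup>2 / \<sigma>) \<partial>lborel) = sqrt (pi * \<sigma>) ^ DIM('a)"
proof -
  have "ennreal (\<integral>x. exp (- (norm (x - a))\<^sup>2 / \<sigma>) \<partial>lborel) = ennreal (sqrt (pi * \<sigma>) ^ DIM('a))"
    using nn_integral_eq_integral[OF integrable_gaussian[OF assms, of a]] nn_integral_gaussian[OF assms, of a]
    by simp
  moreover have "0 \<le> (\<integral>x. exp (- (norm (x - a))\<^sup>2 / \<sigma>) \<partial>lborel)"
    by (intro integral_nonneg_AE) auto
  ultimately show ?thesis using assms by (subst (asm) ennreal_inj) auto
qed

section \<open>Polynomially bounded functions\<close>

definition poly_bounded :: "'a::euclidean_space \<Rightarrow> ('a \<Rightarrow> 'b::real_normed_algebra_1) \<Rightarrow> bool" where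
  "poly_bounded a g \<longleftrightarrow> (\<exists>C n. \<forall>x. norm (g x) \<le> C * (1 + (norm (x - a))\<^sup>2) ^ n)"

lemma poly_boundedE:
  assumes "poly_bounded a g"
  obtains C n where "C \<ge> 0" "\<And>x. norm (g x) \<le> C * (1 + (norm (x - a))\<^sup>2) ^ n"
proof -
  obtain C n where bound: "\<And>x. norm (g x) \<le> C * (1 + (norm (x - a))\<^sup>2) ^ n"
    using assms unfolding poly_bounded_def by blast
  have "C \<ge> 0" using bound[of a] by (simp add: order_trans[OF norm_ge_zero])
  then show thesis using bound by (rule that)
qed

lemma poly_bounded_const: "poly_bounded a (\<lambda>x. c)"
  unfolding poly_bounded_def by (rule exI[of _ "norm c"], rule exI[of _ 0]) simp

lemma poly_bounded_add:
  assumes "poly_bounded a f" "poly_bounded a g"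
  shows "poly_bounded a (\<lambda>x. f x + g x)"
proof -
  obtain C1 n1 C2 n2 where "C1 \<ge> 0" "C2 \<ge> 0"
    and f: "\<And>x. norm (f x) \<le> C1 * (1 + (norm (x - a))\<^sup>2) ^ n1"
    and g: "\<And>x. norm (g x) \<le> C2 * (1 + (norm (x - a))\<^sup>2) ^ n2"
    using assms by (meson poly_boundedE)
  have "norm (f x + g x) \<le> (C1 + C2) * (1 + (norm (x - a))\<^sup>2) ^ (n1 + n2)" for x
  proof -
    have mono: "(1 + (norm (x - a))\<^sup>2) ^ n \<le> (1 + (norm (x - a))\<^sup>2) ^ (n1 + n2)"
      if "n \<le> n1 + n2" for n
      using that by (intro power_increasing) auto
    have "norm (f x + g x) \<le> norm (f x) + norm (g x)" by (rule norm_triangle_ineq)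
    also have "\<dots> \<le> C1 * (1 + (norm (x - a))\<^sup>2) ^ (n1 + n2) + C2 * (1 + (norm (x - a))\<^sup>2) ^ (n1 + n2)"
      using \<open>C1 \<ge> 0\<close> \<open>C2 \<ge> 0\<close>
      by (intro add_mono order.trans[OF f mult_left_mono[OF mono]] order.trans[OF g mult_left_mono[OF mono]]) auto
    finally show ?thesis by (simp add: distrib_right)
  qed
  then show ?thesis unfolding poly_bounded_def by blast
qed

lemma poly_bounded_minus: "poly_bounded a f \<Longrightarrow> poly_bounded a (\<lambda>x. - f x)"
  unfolding poly_bounded_def by simp

lemma poly_bounded_diff:
  assumes "poly_bounded a f" "poly_bounded a g"
  shows "poly_bounded a (\<lambda>x. f x - g x)"
  using poly_bounded_add[OF assms(1) poly_bounded_minus[OF assms(2)]] by simp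

lemma poly_bounded_mult:
  assumes "poly_bounded a f" "poly_bounded a g"
  shows "poly_bounded a (\<lambda>x. f x * g x)"
proof -
  obtain C1 n1 C2 n2 where "C1 \<ge> 0"
    and f: "\<And>x. norm (f x) \<le> C1 * (1 + (norm (x - a))\<^sup>2) ^ n1"
    and g: "\<And>x. norm (g x) \<le> C2 * (1 + (norm (x - a))\<^sup>2) ^ n2"
    using assms by (meson poly_boundedE)
  have "norm (f x * g x) \<le> (C1 * C2) * (1 + (norm (x - a))\<^sup>2) ^ (n1 + n2)" for x
  proof -
    have "norm (f x * g x) \<le> norm (f x) * norm (g x)" by (rule norm_mult_ineq)
    also have "\<dots> \<le> (C1 * (1 + (norm (x - a))\<^sup>2) ^ n1) * (C2 * (1 + (norm (x - a))\<^sup>2) ^ n2)"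
      using \<open>C1 \<ge> 0\<close> by (intro mult_mono f g) auto
    finally show ?thesis by (simp add: power_add algebra_simps)
  qed
  then show ?thesis unfolding poly_bounded_def by blast
qed

lemma poly_bounded_sum:
  "(\<And>i. i \<in> S \<Longrightarrow> poly_bounded a (f i)) \<Longrightarrow> poly_bounded a (\<lambda>x. \<Sum>i\<in>S. f i x)"
  by (induction S rule: infinite_finite_induct) (auto intro: poly_bounded_add poly_bounded_const)

lemma poly_bounded_power: "poly_bounded a f \<Longrightarrow> poly_bounded a (\<lambda>x. (f x) ^ n)"
  by (induction n) (auto intro: poly_bounded_mult poly_bounded_const)

lemma poly_bounded_divide:
  fixes f :: "'a::euclidean_space \<Rightarrow> 'b::real_normed_field"
  shows "poly_bounded a f \<Longrightarrow> poly_bounded a (\<lambda>x. f x / k)"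
  using poly_bounded_mult[OF _ poly_bounded_const, of a f "1 / k"] by simp

lemma poly_bounded_of_real: "poly_bounded a f \<Longrightarrow> poly_bounded a (\<lambda>x. of_real (f x))"
  unfolding poly_bounded_def by simp

lemma poly_bounded_norm: "poly_bounded a f \<Longrightarrow> poly_bounded a (\<lambda>x. norm (f x))"
  unfolding poly_bounded_def by simp

lemma poly_bounded_inner_left:
  fixes a c v :: "'a::euclidean_space"
  shows "poly_bounded a (\<lambda>x. (x - c) \<bullet> v)"
proof -
  have "\<bar>(x - c) \<bullet> v\<bar> \<le> ((1 + norm (a - c)) * norm v) * (1 + (norm (x - a))\<^sup>2) ^ 1" for x
  proof -
    have "2 * norm (x - a) \<le> 1 + (norm (x - a))\<^sup>2"
      using zero_le_power2[of "norm (x - a) - 1"] by (simp add: power2_eq_square algebra_simps)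
    then have "norm (x - a) \<le> 1 + (norm (x - a))\<^sup>2"
      using norm_ge_zero[of "x - a"] by linarith
    moreover have "norm (x - c) \<le> norm (x - a) + norm (a - c)"
      using norm_triangle_ineq[of "x - a" "a - c"] by simp
    ultimately have "norm (x - c) \<le> (1 + norm (a - c)) * (1 + (norm (x - a))\<^sup>2)"
      by (simp add: algebra_simps) (smt (verit) mult_nonneg_nonneg norm_ge_zero zero_le_power2)
    then have "norm (x - c) * norm v \<le> ((1 + norm (a - c)) * (1 + (norm (x - a))\<^sup>2)) * norm v"
      by (rule mult_right_mono) simp
    with Cauchy_Schwarz_ineq2[of "x - c" v] show ?thesis by (simp add: mult_ac)
  qed
  then show ?thesis unfolding poly_bounded_def by (metis real_norm_def)
qed

lemma poly_bounded_inner_right: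
  fixes a c v :: "'a::euclidean_space"
  shows "poly_bounded a (\<lambda>x. v \<bullet> (x - c))"
  using poly_bounded_inner_left[of a c v] by (simp add: inner_commute)

lemma power_one_plus_mult_exp_le:
  fixes A \<sigma> :: real
  assumes "A \<ge> 0" "\<sigma> > 0"
  shows "(1 + A) ^ n * exp (- A / \<sigma>) \<le> (1 + 2 * \<sigma> * n) ^ n * exp (- A / (2 * \<sigma>))"
proof -
  define m where "m = 1 + 2 * \<sigma> * n"
  have m1: "m \<ge> 1" using assms by (simp add: m_def)
  have "1 + A \<le> m * (1 + A / m)" using m1 by (simp add: algebra_simps)
  also have "1 + A / m \<le> exp (A / m)" by (rule exp_ge_add_one_self_aux) (use assms m1 in auto)
  finally have "1 + A \<le> m * exp (A / m)" using m1 by (simp add: mult_left_mono)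
  then have "(1 + A) ^ n \<le> (m * exp (A / m)) ^ n"
    using assms by (intro power_mono) auto
  also have "\<dots> = m ^ n * exp (n * (A / m))" by (simp only: power_mult_distrib exp_of_nat_mult)
  also have "\<dots> \<le> m ^ n * exp (A / (2 * \<sigma>))"
  proof -
    have "n * A * (2 * \<sigma>) \<le> A * m" using assms by (simp add: m_def algebra_simps)
    then have "n * (A / m) \<le> A / (2 * \<sigma>)" using assms m1 by (simp add: field_simps)
    then show ?thesis using m1 by (intro mult_left_mono) auto
  qed
  finally have "(1 + A) ^ n * exp (- A / \<sigma>) \<le> m ^ n * exp (A / (2 * \<sigma>)) * exp (- A / \<sigma>)"
    by (rule mult_right_mono) simp
  also have "\<dots> = m ^ n * exp (- A / (2 * \<sigma>))"
    using assms by (simp add: mult.assoc exp_add[symmetric] field_simps)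
  finally show ?thesis by (simp add: m_def)
qed

lemma integrable_poly_bounded_gaussian:
  fixes g :: "'a::euclidean_space \<Rightarrow> 'b::{real_normed_algebra_1, banach, second_countable_topology}"
  assumes "poly_bounded a g" "continuous_on UNIV g" "\<sigma> > 0"
  shows "integrable lborel (\<lambda>x. exp (- (norm (x - a))\<^sup>2 / \<sigma>) *\<^sub>R g x)"
proof -
  obtain C n where "C \<ge> 0" and bound: "\<And>x. norm (g x) \<le> C * (1 + (norm (x - a))\<^sup>2) ^ n"
    using assms(1) by (meson poly_boundedE)
  show ?thesis
  proof (rule Bochner_Integration.integrable_bound)
    show "integrable lborel (\<lambda>x. (C * (1 + 2 * \<sigma> * n) ^ n) * exp (- (norm (x - a))\<^sup>2 / (2 * \<sigma>)))"
      using integrable_gaussian[of "2 * \<sigma>" a] assms(3) by simp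
    show "(\<lambda>x. exp (- (norm (x - a))\<^sup>2 / \<sigma>) *\<^sub>R g x) \<in> borel_measurable lborel"
      using borel_measurable_continuous_onI[OF assms(2)] by measurable
    show "AE x in lborel. norm (exp (- (norm (x - a))\<^sup>2 / \<sigma>) *\<^sub>R g x)
        \<le> norm ((C * (1 + 2 * \<sigma> * n) ^ n) * exp (- (norm (x - a))\<^sup>2 / (2 * \<sigma>)))"
    proof (intro AE_I2)
      fix x
      have "norm (exp (- (norm (x - a))\<^sup>2 / \<sigma>) *\<^sub>R g x)
          \<le> C * ((1 + (norm (x - a))\<^sup>2) ^ n * exp (- (norm (x - a))\<^sup>2 / \<sigma>))"
        using mult_left_mono[OF bound[of x], of "exp (- (norm (x - a))\<^sup>2 / \<sigma>)"] by (simp add: mult_ac)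
      also have "\<dots> \<le> C * ((1 + 2 * \<sigma> * n) ^ n * exp (- (norm (x - a))\<^sup>2 / (2 * \<sigma>)))"
        using \<open>C \<ge> 0\<close> assms(3) by (intro mult_left_mono power_one_plus_mult_exp_le) auto
      finally show "norm (exp (- (norm (x - a))\<^sup>2 / \<sigma>) *\<^sub>R g x)
          \<le> norm ((C * (1 + 2 * \<sigma> * n) ^ n) * exp (- (norm (x - a))\<^sup>2 / (2 * \<sigma>)))"
        using \<open>C \<ge> 0\<close> assms(3) by (simp add: mult.assoc)
    qed
  qed
qed

lemma integrable_mult_of_weighted_squares:
  fixes f g w :: "'a \<Rightarrow> real"
  assumes "integrable M (\<lambda>x. (f x)\<^sup>2 * w x)" "integrable M (\<lambda>x. (g x)\<^sup>2 * w x)"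
    and "f \<in> borel_measurable M" "g \<in> borel_measurable M" "w \<in> borel_measurable M"
    and "\<And>x. w x \<ge> 0"
  shows "integrable M (\<lambda>x. f x * g x * w x)"
proof (rule Bochner_Integration.integrable_bound)
  show "integrable M (\<lambda>x. (f x)\<^sup>2 * w x + (g x)\<^sup>2 * w x)"
    using assms(1,2) by (rule Bochner_Integration.integrable_add)
  show "(\<lambda>x. f x * g x * w x) \<in> borel_measurable M" using assms(3-5) by measurable
  show "AE x in M. norm (f x * g x * w x) \<le> norm ((f x)\<^sup>2 * w x + (g x)\<^sup>2 * w x)"
  proof (intro AE_I2)
    fix x
    have "2 * \<bar>f x\<bar> * \<bar>g x\<bar> \<le> (f x)\<^sup>2 + (g x)\<^sup>2"
      using sum_squares_bound[of "\<bar>f x\<bar>" "\<bar>g x\<bar>"] by simp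
    moreover have "0 \<le> \<bar>f x\<bar> * \<bar>g x\<bar>" by simp
    ultimately have "\<bar>f x * g x\<bar> \<le> (f x)\<^sup>2 + (g x)\<^sup>2" unfolding abs_mult by linarith
    then have "\<bar>f x * g x\<bar> * w x \<le> ((f x)\<^sup>2 + (g x)\<^sup>2) * w x"
      using assms(6) by (rule mult_right_mono)
    then show "norm (f x * g x * w x) \<le> norm ((f x)\<^sup>2 * w x + (g x)\<^sup>2 * w x)"
      using assms(6)[of x] by (simp add: abs_mult distrib_right)
  qed
qed

section \<open>Integration by parts on \<open>\<real>\<^sup>n\<close>\<close>

lemma integral_lborel_translate:
  fixes f :: "'a::euclidean_space \<Rightarrow> real"
  assumes "f \<in> borel_measurable lborel"
  shows "(\<integral>x. f (v + x) \<partial>lborel) = integral\<^sup>L lborel f"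
  using integral_distr[of "(+) v" lborel borel f] assms by (simp add: lborel_distr_plus)

lemma integrable_lborel_translate:
  fixes f :: "'a::euclidean_space \<Rightarrow> real"
  assumes "integrable lborel f"
  shows "integrable lborel (\<lambda>x. f (v + x))"
  using integrable_distr_eq[of "(+) v" lborel borel f] assms by (simp add: lborel_distr_plus)

lemma nn_integral_lborel_translate:
  fixes f :: "'a::euclidean_space \<Rightarrow> ennreal"
  assumes "f \<in> borel_measurable lborel"
  shows "(\<integral>\<^sup>+x. f (v + x) \<partial>lborel) = integral\<^sup>N lborel f"
  using nn_integral_distr[of "(+) v" lborel borel f] assms by (simp add: lborel_distr_plus)

lemma integrable_segment_average:
  fixes f :: "'a::euclidean_space \<Rightarrow> real"
  assumes "integrable lborel f" "f \<in> borel_measurable borel"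
  shows "integrable (lborel \<Otimes>\<^sub>M lborel) (\<lambda>(x, s). indicator {0..1::real} s * f (x + s *\<^sub>R c))"
proof (rule integrableI_bounded)
  let ?F = "\<lambda>(x, s). indicator {0..1::real} s * f (x + s *\<^sub>R c)"
  note [measurable] = assms(2)
  show "?F \<in> borel_measurable (lborel \<Otimes>\<^sub>M lborel)" by measurable
  have "(\<integral>\<^sup>+x. ennreal (norm (?F (x, s))) \<partial>lborel)
      = indicator {0..1} s * (\<integral>\<^sup>+x. ennreal (norm (f x)) \<partial>lborel)" for s :: real
  proof -
    have "(\<integral>\<^sup>+x. ennreal (norm (?F (x, s))) \<partial>lborel)
        = (\<integral>\<^sup>+x. indicator {0..1} s * ennreal (norm (f (s *\<^sub>R c + x))) \<partial>lborel)"
      by (intro nn_integral_cong) (auto simp: add.commute split: split_indicator)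
    also have "\<dots> = indicator {0..1} s * (\<integral>\<^sup>+x. ennreal (norm (f (s *\<^sub>R c + x))) \<partial>lborel)"
      by (intro nn_integral_cmult) measurable
    also have "(\<integral>\<^sup>+x. ennreal (norm (f (s *\<^sub>R c + x))) \<partial>lborel) = (\<integral>\<^sup>+x. ennreal (norm (f x)) \<partial>lborel)"
      by (intro nn_integral_lborel_translate[where f = "\<lambda>x. ennreal (norm (f x))"]) measurable
    finally show ?thesis .
  qed
  then have "(\<integral>\<^sup>+z. ennreal (norm (?F z)) \<partial>(lborel \<Otimes>\<^sub>M lborel))
      = (\<integral>\<^sup>+s. indicator {0..1::real} s * (\<integral>\<^sup>+x. ennreal (norm (f x)) \<partial>lborel) \<partial>lborel)"
    by (subst lborel_pair.nn_integral_snd[symmetric]) (simp_all, measurable)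
  also have "\<dots> = (\<integral>\<^sup>+x. ennreal (norm (f x)) \<partial>lborel)"
    by (subst mult.commute, subst nn_integral_cmult_indicator) auto
  finally show "(\<integral>\<^sup>+z. ennreal (norm (?F z)) \<partial>(lborel \<Otimes>\<^sub>M lborel)) < \<infinity>"
    using assms(1) by (simp add: integrable_iff_bounded)
qed

lemma integral_segment_directional_derivative:
  fixes \<phi> \<phi>' :: "'a::euclidean_space \<Rightarrow> real"
  assumes deriv: "\<And>x. ((\<lambda>r. \<phi> (x + r *\<^sub>R c)) has_real_derivative \<phi>' x) (at 0)"
    and cont: "continuous_on UNIV \<phi>'"
  shows "(\<integral>s. indicator {0..1::real} s * \<phi>' (x + s *\<^sub>R c) \<partial>lborel) = \<phi> (c + x) - \<phi> x"
proof -
  have "((\<lambda>s. \<phi> (x + s *\<^sub>R c)) has_real_derivative \<phi>' (x + s *\<^sub>R c)) (at s)" for s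
    using deriv[of "x + s *\<^sub>R c"] DERIV_shift[of "\<lambda>s. \<phi> (x + s *\<^sub>R c)" _ 0 s]
    by (simp add: scaleR_add_left add_ac)
  moreover have "continuous_on {0..1} (\<lambda>s. \<phi>' (x + s *\<^sub>R c))"
    by (intro continuous_on_compose2[OF cont]) (auto intro!: continuous_intros)
  ultimately have "(\<integral>s. indicator {0..1} s *\<^sub>R \<phi>' (x + s *\<^sub>R c) \<partial>lborel) = \<phi> (x + 1 *\<^sub>R c) - \<phi> (x + 0 *\<^sub>R c)"
    by (intro integral_FTC_atLeastAtMost)
       (auto intro: DERIV_subset simp: has_real_derivative_iff_has_vector_derivative[symmetric])
  then show ?thesis by (simp add: add.commute)
qed

text \<open>Averaging the fundamental theorem of calculus over all lines in direction \<open>c\<close>: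
  by Fubini, \<open>\<integral> \<phi>' = \<integral>\<^sub>x \<integral>\<^sub>0\<^sup>1 \<phi>'(x + s c) ds = \<integral>\<^sub>x \<phi>(x + c) - \<phi>(x)\<close>, which vanishes by
  translation invariance.\<close>
lemma integral_lborel_directional_derivative_eq_0:
  fixes \<phi> \<phi>' :: "'a::euclidean_space \<Rightarrow> real"
  assumes deriv: "\<And>x. ((\<lambda>r. \<phi> (x + r *\<^sub>R c)) has_real_derivative \<phi>' x) (at 0)"
    and cont: "continuous_on UNIV \<phi>'"
    and int: "integrable lborel \<phi>" "integrable lborel \<phi>'"
  shows "integral\<^sup>L lborel \<phi>' = 0"
proof -
  have meas [measurable]: "\<phi>' \<in> borel_measurable borel" "\<phi> \<in> borel_measurable lborel"
    using borel_measurable_continuous_onI[OF cont] int(1) by auto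
  define F where "F = (\<lambda>(x, s). indicator {0..1::real} s * \<phi>' (x + s *\<^sub>R c))"
  have F_int: "integrable (lborel \<Otimes>\<^sub>M lborel) F"
    unfolding F_def using int(2) meas(1) by (rule integrable_segment_average)
  have line_integral: "(\<integral>x. F (x, s) \<partial>lborel) = indicator {0..1} s * integral\<^sup>L lborel \<phi>'" for s
    using integral_lborel_translate[of \<phi>' "s *\<^sub>R c"] by (simp add: F_def add.commute)
  have "integral\<^sup>L lborel \<phi>' = (\<integral>s. indicator {0..1::real} s *\<^sub>R integral\<^sup>L lborel \<phi>' \<partial>lborel)"
    by simp
  also have "\<dots> = (\<integral>s. (\<integral>x. F (x, s) \<partial>lborel) \<partial>lborel)"
    by (simp add: line_integral)
  also have "\<dots> = (\<integral>x. (\<integral>s. F (x, s) \<partial>lborel) \<partial>lborel)"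
    using lborel_pair.integral_snd[of "\<lambda>x s. F (x, s)"] lborel_pair.integral_fst'[of F] F_int by simp
  also have "\<dots> = (\<integral>x. \<phi> (c + x) \<partial>lborel) - integral\<^sup>L lborel \<phi>"
    unfolding F_def case_prod_conv integral_segment_directional_derivative[OF deriv cont]
    by (rule Bochner_Integration.integral_diff[OF integrable_lborel_translate[OF int(1)] int(1)])
  also have "\<dots> = 0" by (simp add: integral_lborel_translate)
  finally show ?thesis .
qed

section \<open>Derivatives of the frozen Gaussian\<close>

lemma gwp_has_vector_derivative:
  fixes qf pf xf :: "real \<Rightarrow> 'a::euclidean_space"
  assumes "(\<theta>f has_real_derivative \<theta>d) (at s)"
    and "(qf has_vector_derivative qd) (at s)" "(pf has_vector_derivative pd) (at s)"
    and "(xf has_vector_derivative xd) (at s)"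
  shows "((\<lambda>s. gwp \<delta> (\<theta>f s) (qf s) (pf s) (xf s)) has_vector_derivative
     ((\<i> * of_real \<theta>d
       - of_real (((xf s - (2 * \<delta>) *\<^sub>R qf s) \<bullet> (xd - (2 * \<delta>) *\<^sub>R qd)) / (2 * \<delta>\<^sup>2))
       + \<i> * of_real ((pd \<bullet> (xf s - \<delta> *\<^sub>R qf s) + pf s \<bullet> (xd - \<delta> *\<^sub>R qd)) / \<delta>))
      * gwp \<delta> (\<theta>f s) (qf s) (pf s) (xf s))) (at s)"
proof -
  define R where "R s = (norm (xf s - (2 * \<delta>) *\<^sub>R qf s))\<^sup>2 / (4 * \<delta>\<^sup>2)" for s
  define P where "P s = (pf s \<bullet> (xf s - \<delta> *\<^sub>R qf s)) / \<delta>" for s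
  define E where "E s = \<i> * of_real (\<theta>f s) - of_real (R s) + \<i> * of_real (P s)" for s
  define N where "N = complex_of_real ((2 * pi * \<delta>\<^sup>2) powr (- real DIM('a) / 4))"
  have gwp_eq: "gwp \<delta> (\<theta>f s) (qf s) (pf s) (xf s) = N * exp (E s)" for s
    unfolding gwp_def N_def E_def R_def P_def by simp
  have d1: "((\<lambda>s. xf s - (2 * \<delta>) *\<^sub>R qf s) has_vector_derivative (xd - (2 * \<delta>) *\<^sub>R qd)) (at s)"
    and d2: "((\<lambda>s. xf s - \<delta> *\<^sub>R qf s) has_vector_derivative (xd - \<delta> *\<^sub>R qd)) (at s)"
    using assms(2,4) by (auto intro!: derivative_eq_intros)
  have "(R has_real_derivative ((xf s - (2 * \<delta>) *\<^sub>R qf s) \<bullet> (xd - (2 * \<delta>) *\<^sub>R qd)) / (2 * \<delta>\<^sup>2)) (at s)"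
    using has_vector_derivative_divide[OF bounded_bilinear.has_vector_derivative[OF bounded_bilinear_inner d1 d1],
        of "4 * \<delta>\<^sup>2"]
    unfolding R_def power2_norm_eq_inner has_real_derivative_iff_has_vector_derivative
    by (simp add: inner_commute[of "xd - _"] power2_eq_square)
  moreover have "(P has_real_derivative (pd \<bullet> (xf s - \<delta> *\<^sub>R qf s) + pf s \<bullet> (xd - \<delta> *\<^sub>R qd)) / \<delta>) (at s)"
    using bounded_bilinear.has_vector_derivative[OF bounded_bilinear_inner assms(3) d2]
    unfolding P_def has_real_derivative_iff_has_vector_derivative
    by (auto dest: has_vector_derivative_divide simp: add.commute)
  ultimately have "(E has_vector_derivative (\<i> * of_real \<theta>d
       - of_real (((xf s - (2 * \<delta>) *\<^sub>R qf s) \<bullet> (xd - (2 * \<delta>) *\<^sub>R qd)) / (2 * \<delta>\<^sup>2))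
       + \<i> * of_real ((pd \<bullet> (xf s - \<delta> *\<^sub>R qf s) + pf s \<bullet> (xd - \<delta> *\<^sub>R qd)) / \<delta>))) (at s)"
    unfolding E_def[abs_def]
    by (intro has_vector_derivative_add has_vector_derivative_diff has_vector_derivative_mult_right
        has_vector_derivative_of_real assms(1))
  from has_vector_derivative_mult_right[OF field_vector_diff_chain_at[OF this DERIV_exp], of N]
  show ?thesis unfolding gwp_eq by (simp add: o_def ac_simps)
qed

lemma dtheta_gwp_eq: "dtheta_gwp \<delta> \<theta> q p x = \<i> * gwp \<delta> \<theta> q p x"
proof -
  have "((\<lambda>s. \<theta> + s) has_real_derivative 1) (at 0)" by (auto intro!: derivative_eq_intros)
  from gwp_has_vector_derivative[where qf = "\<lambda>_. q" and pf = "\<lambda>_. p" and xf = "\<lambda>_. x" and \<delta> = \<delta>,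
      OF this has_vector_derivative_const has_vector_derivative_const has_vector_derivative_const]
  show ?thesis unfolding dtheta_gwp_def by (simp add: vector_derivative_at)
qed

lemma dq_gwp_eq:
  assumes "\<delta> \<noteq> 0"
  shows "dq_gwp \<delta> \<theta> q p b x
    = (of_real (((x - (2 * \<delta>) *\<^sub>R q) \<bullet> b) / \<delta>) - \<i> * of_real (p \<bullet> b)) * gwp \<delta> \<theta> q p x"
proof -
  have "((\<lambda>s. q + s *\<^sub>R b) has_vector_derivative b) (at 0)" by (auto intro!: derivative_eq_intros)
  from gwp_has_vector_derivative[where \<theta>f = "\<lambda>_. \<theta>" and pf = "\<lambda>_. p" and xf = "\<lambda>_. x" and \<delta> = \<delta>,
      OF DERIV_const this has_vector_derivative_const has_vector_derivative_const] assms
  show ?thesis unfolding dq_gwp_def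
    by (simp add: vector_derivative_at power2_eq_square field_simps inner_simps)
qed

lemma dp_gwp_eq:
  assumes "\<delta> \<noteq> 0"
  shows "dp_gwp \<delta> \<theta> q p b x = \<i> * of_real ((b \<bullet> (x - \<delta> *\<^sub>R q)) / \<delta>) * gwp \<delta> \<theta> q p x"
proof -
  have "((\<lambda>s. p + s *\<^sub>R b) has_vector_derivative b) (at 0)" by (auto intro!: derivative_eq_intros)
  from gwp_has_vector_derivative[where \<theta>f = "\<lambda>_. \<theta>" and qf = "\<lambda>_. q" and xf = "\<lambda>_. x" and \<delta> = \<delta>,
      OF DERIV_const has_vector_derivative_const this has_vector_derivative_const]
  show ?thesis unfolding dp_gwp_def by (simp add: vector_derivative_at)
qed

definition gwp_log_grad :: "real \<Rightarrow> 'a::euclidean_space \<Rightarrow> 'a \<Rightarrow> 'a \<Rightarrow> 'a \<Rightarrow> complex" where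
  "gwp_log_grad \<delta> q p b x =
     of_real (- (((x - (2 * \<delta>) *\<^sub>R q) \<bullet> b) / (2 * \<delta>\<^sup>2))) + \<i> * of_real ((p \<bullet> b) / \<delta>)"

lemma gwp_has_directional_derivative:
  "((\<lambda>r. gwp \<delta> \<theta> q p (x + r *\<^sub>R b)) has_vector_derivative gwp_log_grad \<delta> q p b x * gwp \<delta> \<theta> q p x) (at 0)"
proof -
  have "((\<lambda>r. x + r *\<^sub>R b) has_vector_derivative b) (at 0)" by (auto intro!: derivative_eq_intros)
  from gwp_has_vector_derivative[where \<theta>f = "\<lambda>_. \<theta>" and qf = "\<lambda>_. q" and pf = "\<lambda>_. p" and \<delta> = \<delta>,
      OF DERIV_const has_vector_derivative_const has_vector_derivative_const this]
  show ?thesis by (simp add: gwp_log_grad_def)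
qed

lemma dirderiv_gwp_eq: "dirderiv b (gwp \<delta> \<theta> q p) x = gwp_log_grad \<delta> q p b x * gwp \<delta> \<theta> q p x"
  unfolding dirderiv_def by (rule vector_derivative_at[OF gwp_has_directional_derivative])

lemma dirderiv2_gwp_eq:
  "dirderiv b (dirderiv b (gwp \<delta> \<theta> q p)) x
     = ((gwp_log_grad \<delta> q p b x)\<^sup>2 - of_real ((b \<bullet> b) / (2 * \<delta>\<^sup>2))) * gwp \<delta> \<theta> q p x"
proof -
  have "gwp_log_grad \<delta> q p b (x + r *\<^sub>R b)
      = gwp_log_grad \<delta> q p b x - of_real ((b \<bullet> b) / (2 * \<delta>\<^sup>2)) * of_real r" for r
    unfolding gwp_log_grad_def by (simp add: inner_simps algebra_simps add_divide_distrib diff_divide_distrib)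
  then have "((\<lambda>r. gwp_log_grad \<delta> q p b (x + r *\<^sub>R b)) has_vector_derivative
      - of_real ((b \<bullet> b) / (2 * \<delta>\<^sup>2))) (at 0)"
    by (auto intro!: derivative_eq_intros)
  from has_vector_derivative_mult[OF this gwp_has_directional_derivative]
  have "((\<lambda>r. dirderiv b (gwp \<delta> \<theta> q p) (x + r *\<^sub>R b)) has_vector_derivative
      ((gwp_log_grad \<delta> q p b x)\<^sup>2 - of_real ((b \<bullet> b) / (2 * \<delta>\<^sup>2))) * gwp \<delta> \<theta> q p x) (at 0)"
    by (simp add: dirderiv_gwp_eq power2_eq_square algebra_simps)
  then show ?thesis unfolding dirderiv_def[of b "dirderiv b _"] by (simp add: vector_derivative_at)
qed

definition gwp_laplacian_factor :: "real \<Rightarrow> 'a::euclidean_space \<Rightarrow> 'a \<Rightarrow> 'a \<Rightarrow> complex" where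
  "gwp_laplacian_factor \<delta> q p x = (\<Sum>b\<in>Basis. (gwp_log_grad \<delta> q p b x)\<^sup>2 - of_real (1 / (2 * \<delta>\<^sup>2)))"

lemma laplacian_gwp_eq: "laplacian (gwp \<delta> \<theta> q p) x = gwp_laplacian_factor \<delta> q p x * gwp \<delta> \<theta> q p x"
  unfolding laplacian_def gwp_laplacian_factor_def by (simp add: dirderiv2_gwp_eq sum_distrib_right)

section \<open>The probability density \<open>|u|\<^sup>2\<close>\<close>

definition gwp_density :: "real \<Rightarrow> 'a::euclidean_space \<Rightarrow> 'a \<Rightarrow> real" where
  "gwp_density \<delta> q x =
     ((2 * pi * \<delta>\<^sup>2) powr (- real DIM('a) / 4))\<^sup>2 * exp (- (norm (x - (2 * \<delta>) *\<^sub>R q))\<^sup>2 / (2 * \<delta>\<^sup>2))"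

lemma cnj_gwp_mult_gwp: "cnj (gwp \<delta> \<theta> q p x) * gwp \<delta> \<theta> q p x = of_real (gwp_density \<delta> q x)"
proof -
  define c where "c = (2 * pi * \<delta>\<^sup>2) powr (- real DIM('a) / 4)"
  define E where "E = \<i> * of_real \<theta> - of_real ((norm (x - (2 * \<delta>) *\<^sub>R q))\<^sup>2 / (4 * \<delta>\<^sup>2))
      + \<i> * of_real ((p \<bullet> (x - \<delta> *\<^sub>R q)) / \<delta>)"
  have "cnj (gwp \<delta> \<theta> q p x) * gwp \<delta> \<theta> q p x = of_real (c\<^sup>2) * exp (cnj E + E)"
    unfolding gwp_def c_def[symmetric] E_def[symmetric] by (simp add: exp_cnj[symmetric] exp_add power2_eq_square)
  also have "cnj E + E = of_real (- (norm (x - (2 * \<delta>) *\<^sub>R q))\<^sup>2 / (2 * \<delta>\<^sup>2))"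
    unfolding E_def by (simp add: complex_eq_iff)
  finally show ?thesis unfolding gwp_density_def c_def by (simp flip: exp_of_real)
qed

lemma norm_gwp_power2: "(norm (gwp \<delta> \<theta> q p x))\<^sup>2 = gwp_density \<delta> q x"
  using cnj_gwp_mult_gwp[of \<delta> \<theta> q p x] complex_norm_square[of "gwp \<delta> \<theta> q p x"]
  by (metis mult.commute of_real_eq_iff of_real_power)

lemma cnj_gwp_mult_of_real_mult_gwp:
  "cnj (gwp \<delta> \<theta> q p x) * (of_real (f x) * gwp \<delta> \<theta> q p x) = of_real (f x * gwp_density \<delta> q x)"
  using cnj_gwp_mult_gwp[of \<delta> \<theta> q p x] by (simp add: mult.left_commute)

lemma l2_inner_gwp_mult_of_real:
  "l2_inner (gwp \<delta> \<theta> q p) (\<lambda>x. of_real (f x) * gwp \<delta> \<theta> q p x)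
    = of_real (\<integral>x. f x * gwp_density \<delta> q x \<partial>lborel)"
  unfolding l2_inner_def cnj_gwp_mult_of_real_mult_gwp by (rule integral_complex_of_real)

lemma gwp_density_pos: "\<delta> \<noteq> 0 \<Longrightarrow> gwp_density \<delta> q x > 0"
  unfolding gwp_density_def by simp

lemma gwp_density_nonneg: "gwp_density \<delta> q x \<ge> 0"
  unfolding gwp_density_def by simp

lemma continuous_on_gwp_density: "continuous_on S (gwp_density \<delta> q)"
  unfolding gwp_density_def[abs_def] divide_inverse by (intro continuous_intros)

lemma integral_gwp_density:
  fixes q :: "'a::euclidean_space"
  assumes "\<delta> \<noteq> 0"
  shows "integral\<^sup>L lborel (gwp_density \<delta> q) = 1"
proof -
  define y where "y = 2 * pi * \<delta>\<^sup>2"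
  have y: "y > 0" using assms by (simp add: y_def)
  have "integral\<^sup>L lborel (gwp_density \<delta> q)
      = (y powr (- real DIM('a) / 4))\<^sup>2 * (\<integral>x. exp (- (norm (x - (2 * \<delta>) *\<^sub>R q))\<^sup>2 / (2 * \<delta>\<^sup>2)) \<partial>lborel)"
    unfolding gwp_density_def y_def by (rule integral_mult_right_zero)
  also have "(\<integral>x. exp (- (norm (x - (2 * \<delta>) *\<^sub>R q))\<^sup>2 / (2 * \<delta>\<^sup>2)) \<partial>lborel) = (y powr (1 / 2)) ^ DIM('a)"
    using integral_gaussian[of "2 * \<delta>\<^sup>2" "(2 * \<delta>) *\<^sub>R q"] assms y
    by (simp add: y_def powr_half_sqrt mult_ac)
  also have "(y powr (- real DIM('a) / 4))\<^sup>2 * (y powr (1 / 2)) ^ DIM('a) = 1"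
    using y by (simp add: powr_power powr_add[symmetric])
  finally show ?thesis .
qed

lemma integrable_poly_bounded_gwp_density:
  fixes h :: "'a::euclidean_space \<Rightarrow> 'b::{real_normed_algebra_1, banach, second_countable_topology}"
  assumes "\<delta> \<noteq> 0" "poly_bounded ((2 * \<delta>) *\<^sub>R q) h" "continuous_on UNIV h"
  shows "integrable lborel (\<lambda>x. gwp_density \<delta> q x *\<^sub>R h x)"
  using integrable_scaleR_right[OF integrable_poly_bounded_gaussian[OF assms(2,3), of "2 * \<delta>\<^sup>2"],
      of "((2 * pi * \<delta>\<^sup>2) powr (- real DIM('a) / 4))\<^sup>2"] assms(1)
  by (simp add: gwp_density_def)

lemma gwp_density_has_directional_derivative:
  assumes "\<delta> \<noteq> 0"
  shows "((\<lambda>r. gwp_density \<delta> q (x + r *\<^sub>R c)) has_real_derivative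
      - (((x - (2 * \<delta>) *\<^sub>R q) \<bullet> c) / \<delta>\<^sup>2) * gwp_density \<delta> q x) (at 0)"
  unfolding gwp_density_def power2_norm_add_scaleR_diff using assms
  by (auto intro!: derivative_eq_intros simp: field_simps power2_eq_square)

section \<open>Tangent vectors and the residual\<close>

definition gwp_affine :: "real \<Rightarrow> 'a::euclidean_space \<Rightarrow> 'a \<Rightarrow> 'a \<Rightarrow> real" where
  "gwp_affine \<delta> q A x = ((x - (2 * \<delta>) *\<^sub>R q) \<bullet> A) / \<delta>"

lemma poly_bounded_gwp_affine: "poly_bounded ((2 * \<delta>) *\<^sub>R q) (gwp_affine \<delta> q A)"
  unfolding gwp_affine_def[abs_def] by (intro poly_bounded_divide poly_bounded_inner_left)

lemma continuous_on_gwp_affine: "continuous_on S (gwp_affine \<delta> q A)"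
  unfolding gwp_affine_def[abs_def] divide_inverse by (intro continuous_intros)

lemma sum_Basis_of_real_inner_mult:
  "(\<Sum>b\<in>Basis. of_real (u \<bullet> b) * of_real (v \<bullet> b) :: 'b::real_algebra_1) = of_real (u \<bullet> v)"
  by (simp add: euclidean_inner[of u v] of_real_sum flip: of_real_mult)

lemma gwp_affine_in_tangent_space:
  assumes "\<delta> \<noteq> 0"
  shows "(\<lambda>x. of_real (gwp_affine \<delta> q A x) * gwp \<delta> \<theta> q p x) \<in> tangent_space \<delta> \<theta> q p"
proof -
  have "of_real (gwp_affine \<delta> q A x) * gwp \<delta> \<theta> q p x
      = of_real (A \<bullet> p) * dtheta_gwp \<delta> \<theta> q p x
        + (\<Sum>b\<in>Basis. of_real (A \<bullet> b) * dq_gwp \<delta> \<theta> q p b x + of_real 0 * dp_gwp \<delta> \<theta> q p b x)" for x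
  proof -
    let ?u = "gwp \<delta> \<theta> q p x"
    have "(\<Sum>b\<in>Basis. of_real (A \<bullet> b) * dq_gwp \<delta> \<theta> q p b x + of_real 0 * dp_gwp \<delta> \<theta> q p b x)
        = (\<Sum>b\<in>Basis. of_real (A \<bullet> b) * of_real ((x - (2 * \<delta>) *\<^sub>R q) \<bullet> b) * (?u / of_real \<delta>)
            - of_real (A \<bullet> b) * of_real (p \<bullet> b) * (\<i> * ?u))"
      using assms by (intro sum.cong refl) (simp add: dq_gwp_eq field_simps)
    also have "\<dots> = of_real (A \<bullet> (x - (2 * \<delta>) *\<^sub>R q)) * (?u / of_real \<delta>) - of_real (A \<bullet> p) * (\<i> * ?u)"
      by (simp only: sum_subtractf sum_distrib_right[symmetric] sum_Basis_of_real_inner_mult)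
    finally show ?thesis
      by (simp add: dtheta_gwp_eq gwp_affine_def inner_commute)
  qed
  then show ?thesis unfolding tangent_space_def mem_Collect_eq by (intro exI ext)
qed

lemma i_gwp_affine_in_tangent_space:
  assumes "\<delta> \<noteq> 0"
  shows "(\<lambda>x. \<i> * (of_real (gwp_affine \<delta> q A x) * gwp \<delta> \<theta> q p x)) \<in> tangent_space \<delta> \<theta> q p"
proof -
  have "\<i> * (of_real (gwp_affine \<delta> q A x) * gwp \<delta> \<theta> q p x)
      = of_real (- (A \<bullet> q)) * dtheta_gwp \<delta> \<theta> q p x
        + (\<Sum>b\<in>Basis. of_real 0 * dq_gwp \<delta> \<theta> q p b x + of_real (A \<bullet> b) * dp_gwp \<delta> \<theta> q p b x)" for x
  proof -
    let ?u = "gwp \<delta> \<theta> q p x"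
    have "(\<Sum>b\<in>Basis. of_real 0 * dq_gwp \<delta> \<theta> q p b x + of_real (A \<bullet> b) * dp_gwp \<delta> \<theta> q p b x)
        = (\<Sum>b\<in>Basis. of_real (A \<bullet> b) * of_real ((x - \<delta> *\<^sub>R q) \<bullet> b) * (\<i> * ?u / of_real \<delta>))"
      using assms by (intro sum.cong refl) (simp add: dp_gwp_eq inner_commute)
    also have "\<dots> = of_real (A \<bullet> (x - \<delta> *\<^sub>R q)) * (\<i> * ?u / of_real \<delta>)"
      by (simp only: sum_distrib_right[symmetric] sum_Basis_of_real_inner_mult)
    also have "A \<bullet> (x - \<delta> *\<^sub>R q) = (x - (2 * \<delta>) *\<^sub>R q) \<bullet> A + \<delta> * (A \<bullet> q)"
      by (simp add: inner_commute inner_diff_right)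
    finally show ?thesis
      using assms by (simp add: dtheta_gwp_eq gwp_affine_def field_simps)
  qed
  then show ?thesis unfolding tangent_space_def mem_Collect_eq by (intro exI ext)
qed

definition gwp_residual_factor ::
    "real \<Rightarrow> real \<Rightarrow> ('a::euclidean_space \<Rightarrow> real) \<Rightarrow> 'a \<Rightarrow> 'a \<Rightarrow> real \<Rightarrow> 'a \<Rightarrow> 'a \<Rightarrow> 'a \<Rightarrow> complex" where
  "gwp_residual_factor \<delta> hb V q p \<theta>d qd pd x =
     \<i> * of_real \<theta>d + of_real (((x - (2 * \<delta>) *\<^sub>R q) \<bullet> qd) / \<delta>)
     + \<i> * of_real ((pd \<bullet> (x - \<delta> *\<^sub>R q) - \<delta> * (p \<bullet> qd)) / \<delta>)
     - \<i> * of_real (hb / 2) * gwp_laplacian_factor \<delta> q p x + \<i> * of_real (V x / hb)"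

lemma gwp_curve_residual_eq:
  assumes "\<delta> \<noteq> 0" "hb \<noteq> 0"
    and "(\<theta> has_real_derivative \<theta>d) (at t)"
    and "(q has_vector_derivative qd) (at t)" "(p has_vector_derivative pd) (at t)"
  shows "time_deriv (gwp_curve \<delta> \<theta> q p) t x - hamiltonian hb V (gwp_curve \<delta> \<theta> q p t) x / (\<i> * of_real hb)
    = gwp_residual_factor \<delta> hb V (q t) (p t) \<theta>d qd pd x * gwp_curve \<delta> \<theta> q p t x"
proof -
  from gwp_has_vector_derivative[where xf = "\<lambda>_. x" and \<delta> = \<delta>, OF assms(3-5) has_vector_derivative_const]
  have time_deriv: "time_deriv (gwp_curve \<delta> \<theta> q p) t x
      = (\<i> * of_real \<theta>d + of_real (((x - (2 * \<delta>) *\<^sub>R q t) \<bullet> qd) / \<delta>)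
         + \<i> * of_real ((pd \<bullet> (x - \<delta> *\<^sub>R q t) - \<delta> * (p t \<bullet> qd)) / \<delta>)) * gwp_curve \<delta> \<theta> q p t x"
    using assms(1) unfolding time_deriv_def gwp_curve_def
    by (simp add: vector_derivative_at power2_eq_square field_simps inner_simps)
  have hamiltonian: "hamiltonian hb V (gwp_curve \<delta> \<theta> q p t) x
      = (- of_real (hb\<^sup>2 / 2) * gwp_laplacian_factor \<delta> (q t) (p t) x + of_real (V x)) * gwp_curve \<delta> \<theta> q p t x"
    unfolding hamiltonian_def gwp_curve_def laplacian_gwp_eq[abs_def] by (simp add: algebra_simps)
  show ?thesis
    unfolding time_deriv hamiltonian using assms(2)
    by (simp add: gwp_residual_factor_def field_simps power2_eq_square)
qed

lemma Re_gwp_residual_factor: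
  assumes "\<delta> \<noteq> 0"
  shows "Re (gwp_residual_factor \<delta> hb V q p \<theta>d qd pd x) = gwp_affine \<delta> q (qd - (hb / (2 * \<delta>\<^sup>2)) *\<^sub>R p) x"
proof -
  have "Im (gwp_laplacian_factor \<delta> q p x)
      = (- 1 / \<delta> ^ 3) * (\<Sum>b\<in>Basis. ((x - (2 * \<delta>) *\<^sub>R q) \<bullet> b) * (p \<bullet> b))"
    unfolding gwp_laplacian_factor_def Im_sum sum_distrib_left
    using assms by (intro sum.cong refl) (simp add: gwp_log_grad_def power2_eq_square power3_eq_cube field_simps)
  also have "\<dots> = - (((x - (2 * \<delta>) *\<^sub>R q) \<bullet> p) / \<delta> ^ 3)"
    by (simp add: euclidean_inner[of _ p])
  finally have Im_laplacian: "Im (gwp_laplacian_factor \<delta> q p x) = - (((x - (2 * \<delta>) *\<^sub>R q) \<bullet> p) / \<delta> ^ 3)" .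
  show ?thesis
    using assms by (simp add: Im_laplacian gwp_residual_factor_def gwp_affine_def inner_diff_right
        power2_eq_square power3_eq_cube field_simps)
qed

lemma Im_gwp_residual_factor:
  fixes q p :: "'a::euclidean_space"
  shows "Im (gwp_residual_factor \<delta> hb V q p \<theta>d qd pd x) =
     \<theta>d + (pd \<bullet> (x - \<delta> *\<^sub>R q) - \<delta> * (p \<bullet> qd)) / \<delta>
     - (hb / 2) * ((norm (x - (2 * \<delta>) *\<^sub>R q))\<^sup>2 / (4 * \<delta> ^ 4) - (norm p)\<^sup>2 / \<delta>\<^sup>2 - real DIM('a) / (2 * \<delta>\<^sup>2))
     + V x / hb"
proof -
  have "Re (gwp_laplacian_factor \<delta> q p x)
      = (\<Sum>b\<in>(Basis::'a set). ((x - (2 * \<delta>) *\<^sub>R q) \<bullet> b)\<^sup>2 / (4 * \<delta> ^ 4)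
          - (p \<bullet> b)\<^sup>2 / \<delta>\<^sup>2 - 1 / (2 * \<delta>\<^sup>2))"
    unfolding gwp_laplacian_factor_def Re_sum
    by (intro sum.cong refl) (simp add: gwp_log_grad_def power2_eq_square power4_eq_xxxx field_simps)
  also have "\<dots> = (norm (x - (2 * \<delta>) *\<^sub>R q))\<^sup>2 / (4 * \<delta> ^ 4) - (norm p)\<^sup>2 / \<delta>\<^sup>2 - real DIM('a) / (2 * \<delta>\<^sup>2)"
    by (simp add: sum_subtractf sum_divide_distrib[symmetric] power2_norm_eq_sum_Basis)
  finally show ?thesis by (simp add: gwp_residual_factor_def)
qed

lemma poly_bounded_gwp_laplacian_factor: "poly_bounded ((2 * \<delta>) *\<^sub>R q) (gwp_laplacian_factor \<delta> q p)"
  unfolding gwp_laplacian_factor_def[abs_def] gwp_log_grad_def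
  by (intro poly_bounded_sum poly_bounded_diff poly_bounded_power poly_bounded_add poly_bounded_mult
      poly_bounded_of_real poly_bounded_minus poly_bounded_divide poly_bounded_inner_left poly_bounded_const)

lemma continuous_on_gwp_laplacian_factor: "continuous_on S (gwp_laplacian_factor \<delta> q p)"
  unfolding gwp_laplacian_factor_def[abs_def] gwp_log_grad_def divide_inverse by (intro continuous_intros)

lemma poly_bounded_gwp_residual_factor_minus_potential:
  "poly_bounded ((2 * \<delta>) *\<^sub>R q) (\<lambda>x. gwp_residual_factor \<delta> hb V q p \<theta>d qd pd x - \<i> * of_real (V x / hb))"
proof -
  have "(\<lambda>x. gwp_residual_factor \<delta> hb V q p \<theta>d qd pd x - \<i> * of_real (V x / hb))
      = (\<lambda>x. \<i> * of_real \<theta>d + of_real (((x - (2 * \<delta>) *\<^sub>R q) \<bullet> qd) / \<delta>)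
          + \<i> * of_real ((pd \<bullet> (x - \<delta> *\<^sub>R q) - \<delta> * (p \<bullet> qd)) / \<delta>)
          - \<i> * of_real (hb / 2) * gwp_laplacian_factor \<delta> q p x)"
    by (simp add: gwp_residual_factor_def)
  then show ?thesis
    by (simp only:) (intro poly_bounded_diff poly_bounded_add poly_bounded_mult poly_bounded_of_real
        poly_bounded_divide poly_bounded_inner_left poly_bounded_inner_right poly_bounded_const
        poly_bounded_gwp_laplacian_factor)
qed

section \<open>Galerkin orthogonality\<close>

lemma l2_inner_i_left: "l2_inner (\<lambda>x. \<i> * f x) g = - \<i> * l2_inner f g"
  unfolding l2_inner_def by (simp add: mult.assoc)

lemma McLachlan_or_KS_orthogonal:
  assumes "McLachlan_sol \<delta> hb V I \<theta> q p \<or> KS_sol \<delta> hb V I \<theta> q p" "t \<in> I"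
    and "v \<in> tangent_space \<delta> (\<theta> t) (q t) (p t)" "(\<lambda>x. \<i> * v x) \<in> tangent_space \<delta> (\<theta> t) (q t) (p t)"
  shows "l2_inner v (\<lambda>x. time_deriv (gwp_curve \<delta> \<theta> q p) t x
           - hamiltonian hb V (gwp_curve \<delta> \<theta> q p t) x / (\<i> * of_real hb)) = 0"
    (is "l2_inner v ?w = 0")
proof -
  from assms(1) have "Re (l2_inner v ?w) = 0 \<and> Im (l2_inner v ?w) = 0"
  proof
    assume "McLachlan_sol \<delta> hb V I \<theta> q p"
    then have "Re (l2_inner v ?w) = 0 \<and> Re (l2_inner (\<lambda>x. \<i> * v x) ?w) = 0"
      using assms(2-4) unfolding McLachlan_sol_def by blast
    then show ?thesis by (simp add: l2_inner_i_left)
  next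
    assume "KS_sol \<delta> hb V I \<theta> q p"
    then have "Im (l2_inner v ?w) = 0 \<and> Im (l2_inner (\<lambda>x. \<i> * v x) ?w) = 0"
      using assms(2-4) unfolding KS_sol_def by blast
    then show ?thesis by (simp add: l2_inner_i_left)
  qed
  then show ?thesis by (simp add: complex_eq_iff)
qed

lemma gwp_solution_residual_orthogonal:
  assumes "\<delta> \<noteq> 0" "hb \<noteq> 0"
    and "McLachlan_sol \<delta> hb V I \<theta> q p \<or> KS_sol \<delta> hb V I \<theta> q p" "t \<in> I"
    and "(\<theta> has_real_derivative \<theta>d) (at t)"
    and "(q has_vector_derivative qd) (at t)" "(p has_vector_derivative pd) (at t)"
  shows "(\<integral>x. of_real (gwp_affine \<delta> (q t) A x * gwp_density \<delta> (q t) x)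
              * gwp_residual_factor \<delta> hb V (q t) (p t) \<theta>d qd pd x \<partial>lborel) = 0"
proof -
  let ?v = "\<lambda>x. of_real (gwp_affine \<delta> (q t) A x) * gwp_curve \<delta> \<theta> q p t x"
  have "?v \<in> tangent_space \<delta> (\<theta> t) (q t) (p t)" "(\<lambda>x. \<i> * ?v x) \<in> tangent_space \<delta> (\<theta> t) (q t) (p t)"
    unfolding gwp_curve_def
    using gwp_affine_in_tangent_space[OF assms(1)] i_gwp_affine_in_tangent_space[OF assms(1)] by auto
  from McLachlan_or_KS_orthogonal[OF assms(3,4) this]
  have orthogonal: "l2_inner ?v (\<lambda>x. time_deriv (gwp_curve \<delta> \<theta> q p) t x
           - hamiltonian hb V (gwp_curve \<delta> \<theta> q p t) x / (\<i> * of_real hb)) = 0" .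
  have pointwise: "cnj (?v x) * (gwp_residual_factor \<delta> hb V (q t) (p t) \<theta>d qd pd x * gwp_curve \<delta> \<theta> q p t x)
      = of_real (gwp_affine \<delta> (q t) A x * gwp_density \<delta> (q t) x) * gwp_residual_factor \<delta> hb V (q t) (p t) \<theta>d qd pd x"
    for x
    using cnj_gwp_mult_gwp[of \<delta> "\<theta> t" "q t" "p t" x] by (simp add: gwp_curve_def mult_ac)
  show ?thesis
    using orthogonal unfolding gwp_curve_residual_eq[OF assms(1,2,5-7)] l2_inner_def pointwise .
qed

lemma integrable_potential_square_gwp_density:
  fixes V :: "'a::euclidean_space \<Rightarrow> real"
  assumes "\<delta> \<noteq> 0" "continuous_on UNIV V" "in_dom_H hb V (gwp \<delta> \<theta> q p)"
  shows "integrable lborel (\<lambda>x. (V x)\<^sup>2 * gwp_density \<delta> q x)"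
proof (rule Bochner_Integration.integrable_bound)
  let ?u = "gwp \<delta> \<theta> q p" and ?L = "gwp_laplacian_factor \<delta> q p" and ?H = "hamiltonian hb V (gwp \<delta> \<theta> q p)"
  have "integrable lborel (\<lambda>x. gwp_density \<delta> q x *\<^sub>R (norm (?L x))\<^sup>2)"
    using assms(1) poly_bounded_power[OF poly_bounded_norm[OF poly_bounded_gwp_laplacian_factor]]
    by (intro integrable_poly_bounded_gwp_density continuous_intros continuous_on_gwp_laplacian_factor)
  then show "integrable lborel (\<lambda>x. 2 * (norm (?H x))\<^sup>2 + 2 * (hb\<^sup>2 / 2)\<^sup>2 * (gwp_density \<delta> q x *\<^sub>R (norm (?L x))\<^sup>2))"
    using assms(3) unfolding in_dom_H_def by (intro Bochner_Integration.integrable_add integrable_mult_right)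
  show "(\<lambda>x. (V x)\<^sup>2 * gwp_density \<delta> q x) \<in> borel_measurable lborel"
    using borel_measurable_continuous_onI[OF assms(2)]
      borel_measurable_continuous_onI[OF continuous_on_gwp_density[of UNIV \<delta> q]] by measurable
  show "AE x in lborel. norm ((V x)\<^sup>2 * gwp_density \<delta> q x)
      \<le> norm (2 * (norm (?H x))\<^sup>2 + 2 * (hb\<^sup>2 / 2)\<^sup>2 * (gwp_density \<delta> q x *\<^sub>R (norm (?L x))\<^sup>2))"
  proof (intro AE_I2)
    fix x
    have "of_real (V x) * ?u x = ?H x + of_real (hb\<^sup>2 / 2) * ?L x * ?u x"
      by (simp add: hamiltonian_def laplacian_gwp_eq)
    then have "norm (of_real (V x) * ?u x) \<le> norm (?H x) + norm (of_real (hb\<^sup>2 / 2) * ?L x * ?u x)"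
      by (simp only: norm_triangle_ineq)
    then have "\<bar>V x\<bar> * norm (?u x) \<le> norm (?H x) + hb\<^sup>2 / 2 * norm (?L x) * norm (?u x)"
      by (simp add: norm_mult norm_power)
    then have "(\<bar>V x\<bar> * norm (?u x))\<^sup>2 \<le> (norm (?H x) + hb\<^sup>2 / 2 * norm (?L x) * norm (?u x))\<^sup>2"
      by (intro power_mono) auto
    also have "\<dots> \<le> 2 * (norm (?H x))\<^sup>2 + 2 * (hb\<^sup>2 / 2 * norm (?L x) * norm (?u x))\<^sup>2"
      using sum_squares_bound[of "norm (?H x)" "hb\<^sup>2 / 2 * norm (?L x) * norm (?u x)"]
      by (simp add: power2_sum)
    also have "\<dots> = 2 * (norm (?H x))\<^sup>2 + 2 * (hb\<^sup>2 / 2)\<^sup>2 * (gwp_density \<delta> q x *\<^sub>R (norm (?L x))\<^sup>2)"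
      using norm_gwp_power2[of \<delta> \<theta> q p x] by (simp add: power_mult_distrib power_divide field_simps)
    finally show "norm ((V x)\<^sup>2 * gwp_density \<delta> q x)
        \<le> norm (2 * (norm (?H x))\<^sup>2 + 2 * (hb\<^sup>2 / 2)\<^sup>2 * (gwp_density \<delta> q x *\<^sub>R (norm (?L x))\<^sup>2))"
      using gwp_density_nonneg[of \<delta> q x] by (simp add: power_mult_distrib norm_gwp_power2)
  qed
qed

lemma continuous_on_gwp_residual_factor:
  "continuous_on UNIV V \<Longrightarrow> continuous_on UNIV (gwp_residual_factor \<delta> hb V q p \<theta>d qd pd)"
  unfolding gwp_residual_factor_def[abs_def] divide_inverse
  by (intro continuous_intros continuous_on_gwp_laplacian_factor) auto

lemma integrable_gwp_residual_moment:
  fixes V h :: "'a::euclidean_space \<Rightarrow> real"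
  assumes "\<delta> \<noteq> 0" "continuous_on UNIV V" "integrable lborel (\<lambda>x. (V x)\<^sup>2 * gwp_density \<delta> q x)"
    and "poly_bounded ((2 * \<delta>) *\<^sub>R q) h" "continuous_on UNIV h"
  shows "integrable lborel (\<lambda>x. of_real (h x * gwp_density \<delta> q x) * gwp_residual_factor \<delta> hb V q p \<theta>d qd pd x)"
proof -
  let ?\<rho> = "gwp_density \<delta> q"
  let ?P = "\<lambda>x. gwp_residual_factor \<delta> hb V q p \<theta>d qd pd x - \<i> * of_real (V x / hb)"
  have "continuous_on UNIV ?P"
    unfolding divide_inverse by (intro continuous_intros continuous_on_gwp_residual_factor assms(2))
  from integrable_poly_bounded_gwp_density[OF assms(1)
      poly_bounded_mult[OF poly_bounded_of_real[OF assms(4)] poly_bounded_gwp_residual_factor_minus_potential]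
      continuous_on_mult[OF continuous_on_of_real[OF assms(5)] this]]
  have "integrable lborel (\<lambda>x. ?\<rho> x *\<^sub>R (of_real (h x) * ?P x))" .
  moreover have "integrable lborel (\<lambda>x. h x * V x * ?\<rho> x)"
  proof (rule integrable_mult_of_weighted_squares)
    have "integrable lborel (\<lambda>x. ?\<rho> x *\<^sub>R (h x)\<^sup>2)"
      by (intro integrable_poly_bounded_gwp_density assms(1) poly_bounded_power assms(4)
          continuous_intros assms(5))
    then show "integrable lborel (\<lambda>x. (h x)\<^sup>2 * ?\<rho> x)" by (simp add: mult.commute)
  qed (use assms(3) borel_measurable_continuous_onI[OF assms(2)] borel_measurable_continuous_onI[OF assms(5)]
      borel_measurable_continuous_onI[OF continuous_on_gwp_density[of UNIV]] gwp_density_nonneg in auto)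
  ultimately have "integrable lborel (\<lambda>x. ?\<rho> x *\<^sub>R (of_real (h x) * ?P x)
      + (\<i> / of_real hb) * of_real (h x * V x * ?\<rho> x))"
    by (intro Bochner_Integration.integrable_add integrable_mult_right integrable_of_real)
  then show ?thesis by (simp add: scaleR_conv_of_real algebra_simps)
qed

section \<open>The equations of motion\<close>

lemma gwp_affine_integral_power2_eq_0D:
  assumes "\<delta> \<noteq> 0" "(\<integral>x. (gwp_affine \<delta> q A x)\<^sup>2 * gwp_density \<delta> q x \<partial>lborel) = 0"
  shows "A = 0"
proof -
  let ?f = "\<lambda>x. (gwp_affine \<delta> q A x)\<^sup>2 * gwp_density \<delta> q x"
  have cont: "continuous_on UNIV ?f"
    by (intro continuous_intros continuous_on_gwp_affine continuous_on_gwp_density)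
  have "integrable lborel (\<lambda>x. gwp_density \<delta> q x *\<^sub>R (gwp_affine \<delta> q A x)\<^sup>2)"
    by (intro integrable_poly_bounded_gwp_density assms(1) poly_bounded_power poly_bounded_gwp_affine
        continuous_intros continuous_on_gwp_affine)
  then have "integrable lborel ?f" by (simp add: mult.commute)
  moreover have "AE x in lborel. 0 \<le> ?f x"
    by (intro AE_I2 mult_nonneg_nonneg zero_le_power2 gwp_density_nonneg)
  ultimately have "AE x in lborel. ?f x = 0"
    using integral_nonneg_eq_0_iff_AE[of lborel ?f] assms(2) by blast
  then have "AE x in lebesgue. x \<in> {x. ?f x = 0}" by (auto intro: AE_completion)
  moreover have "closed {x. ?f x = 0}" using cont by (intro closed_Collect_eq) auto
  ultimately have "?f ((2 * \<delta>) *\<^sub>R q + \<delta> *\<^sub>R A) = 0"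
    using mem_closed_if_AE_lebesgue by blast
  then have "gwp_affine \<delta> q A ((2 * \<delta>) *\<^sub>R q + \<delta> *\<^sub>R A) = 0"
    using gwp_density_pos[OF assms(1), of q "(2 * \<delta>) *\<^sub>R q + \<delta> *\<^sub>R A"] by auto
  then show ?thesis using assms(1) by (simp add: gwp_affine_def)
qed

lemma gwp_residual_orthogonal_imp_velocity_eq:
  fixes V :: "'a::euclidean_space \<Rightarrow> real"
  assumes "\<delta> \<noteq> 0" "continuous_on UNIV V" "integrable lborel (\<lambda>x. (V x)\<^sup>2 * gwp_density \<delta> q x)"
    and orthogonal: "\<And>A. (\<integral>x. of_real (gwp_affine \<delta> q A x * gwp_density \<delta> q x)
                          * gwp_residual_factor \<delta> hb V q p \<theta>d qd pd x \<partial>lborel) = 0"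
  shows "qd = (hb / (2 * \<delta>\<^sup>2)) *\<^sub>R p"
proof -
  define A where "A = qd - (hb / (2 * \<delta>\<^sup>2)) *\<^sub>R p"
  have "(\<integral>x. (gwp_affine \<delta> q A x)\<^sup>2 * gwp_density \<delta> q x \<partial>lborel)
      = (\<integral>x. Re (of_real (gwp_affine \<delta> q A x * gwp_density \<delta> q x)
                  * gwp_residual_factor \<delta> hb V q p \<theta>d qd pd x) \<partial>lborel)"
    by (intro Bochner_Integration.integral_cong)
      (simp_all add: Re_gwp_residual_factor[OF assms(1)] A_def power2_eq_square)
  also have "\<dots> = Re (\<integral>x. of_real (gwp_affine \<delta> q A x * gwp_density \<delta> q x)
                  * gwp_residual_factor \<delta> hb V q p \<theta>d qd pd x \<partial>lborel)"
    by (intro integral_Re integrable_gwp_residual_moment assms(1-3) poly_bounded_gwp_affine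
        continuous_on_gwp_affine)
  also have "\<dots> = 0" unfolding orthogonal by simp
  finally have "A = 0" by (rule gwp_affine_integral_power2_eq_0D[OF assms(1)])
  then show ?thesis by (simp add: A_def)
qed

lemma gwp_density_integration_by_parts:
  fixes f f' :: "'a::euclidean_space \<Rightarrow> real"
  assumes "\<delta> \<noteq> 0"
    and deriv: "\<And>x. ((\<lambda>r. f (x + r *\<^sub>R c)) has_real_derivative f' x) (at 0)"
    and cont: "continuous_on UNIV f" "continuous_on UNIV f'"
    and int: "integrable lborel (\<lambda>x. f x * gwp_density \<delta> q x)" "integrable lborel (\<lambda>x. f' x * gwp_density \<delta> q x)"
      "integrable lborel (\<lambda>x. gwp_affine \<delta> q c x * f x * gwp_density \<delta> q x)"
  shows "(\<integral>x. f' x * gwp_density \<delta> q x \<partial>lborel)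
    = (\<integral>x. gwp_affine \<delta> q c x * f x * gwp_density \<delta> q x \<partial>lborel) / \<delta>"
proof -
  let ?\<phi>' = "\<lambda>x. f' x * gwp_density \<delta> q x - gwp_affine \<delta> q c x * f x * gwp_density \<delta> q x / \<delta>"
  have "((\<lambda>r. f (x + r *\<^sub>R c) * gwp_density \<delta> q (x + r *\<^sub>R c)) has_real_derivative ?\<phi>' x) (at 0)" for x
    using DERIV_mult[OF deriv gwp_density_has_directional_derivative[OF assms(1)]] assms(1)
    by (simp add: gwp_affine_def power2_eq_square field_simps)
  then have "integral\<^sup>L lborel ?\<phi>' = 0"
    using int by (intro integral_lborel_directional_derivative_eq_0)
      (auto intro!: continuous_intros cont continuous_on_gwp_affine continuous_on_gwp_density simp: assms(1))
  then show ?thesis using int by simp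
qed

lemma integral_gwp_affine_mult_gwp_density:
  assumes "\<delta> \<noteq> 0"
  shows "(\<integral>x. gwp_affine \<delta> q c x * gwp_density \<delta> q x \<partial>lborel) = 0"
proof -
  have int: "integrable lborel (\<lambda>x. gwp_density \<delta> q x *\<^sub>R h x)"
    if "poly_bounded ((2 * \<delta>) *\<^sub>R q) h" "continuous_on UNIV h" for h :: "'a \<Rightarrow> real"
    using integrable_poly_bounded_gwp_density[OF assms that] .
  have "(\<integral>x. 0 * gwp_density \<delta> q x \<partial>lborel) = (\<integral>x. gwp_affine \<delta> q c x * 1 * gwp_density \<delta> q x \<partial>lborel) / \<delta>"
    using int[OF poly_bounded_const continuous_on_const] int[OF poly_bounded_gwp_affine continuous_on_gwp_affine]
    by (intro gwp_density_integration_by_parts assms) (auto simp: mult.commute)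
  then show ?thesis using assms by simp
qed

lemma integrable_affine_plus_mult_gwp_density:
  assumes "\<delta> \<noteq> 0" "integrable lborel (\<lambda>x. f x * gwp_density \<delta> q x)"
  shows "integrable lborel (\<lambda>x. (a + b * gwp_affine \<delta> q c x + f x) * gwp_density \<delta> q x)"
proof -
  have "integrable lborel (\<lambda>x. gwp_density \<delta> q x *\<^sub>R (a + b * gwp_affine \<delta> q c x))"
    by (intro integrable_poly_bounded_gwp_density assms(1) poly_bounded_add poly_bounded_mult
        poly_bounded_const poly_bounded_gwp_affine continuous_intros continuous_on_gwp_affine)
  from Bochner_Integration.integrable_add[OF this assms(2)] show ?thesis by (simp add: algebra_simps)
qed

lemma integral_affine_plus_mult_gwp_density:
  assumes "\<delta> \<noteq> 0" "integrable lborel (\<lambda>x. f x * gwp_density \<delta> q x)"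
  shows "(\<integral>x. (a + b * gwp_affine \<delta> q c x + f x) * gwp_density \<delta> q x \<partial>lborel)
    = a + (\<integral>x. f x * gwp_density \<delta> q x \<partial>lborel)"
proof -
  have "integrable lborel (gwp_density \<delta> q)" "integrable lborel (\<lambda>x. gwp_affine \<delta> q c x * gwp_density \<delta> q x)"
    using integrable_affine_plus_mult_gwp_density[OF assms(1), of "\<lambda>_. 0" q 1 0 c]
      integrable_affine_plus_mult_gwp_density[OF assms(1), of "\<lambda>_. 0" q 0 1 c] by simp_all
  then have "(\<integral>x. (a + b * gwp_affine \<delta> q c x + f x) * gwp_density \<delta> q x \<partial>lborel)
      = a * integral\<^sup>L lborel (gwp_density \<delta> q) + b * (\<integral>x. gwp_affine \<delta> q c x * gwp_density \<delta> q x \<partial>lborel)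
        + (\<integral>x. f x * gwp_density \<delta> q x \<partial>lborel)"
    using assms(2) by (simp add: algebra_simps)
  then show ?thesis by (simp add: integral_gwp_density[OF assms(1)] integral_gwp_affine_mult_gwp_density[OF assms(1)])
qed

lemma Im_gwp_residual_factor_has_directional_derivative:
  assumes "\<delta> \<noteq> 0" "hb \<noteq> 0" "((\<lambda>r. V (x + r *\<^sub>R c)) has_real_derivative V' x) (at 0)"
  shows "((\<lambda>r. Im (gwp_residual_factor \<delta> hb V q p \<theta>d qd pd (x + r *\<^sub>R c))) has_real_derivative
      (pd \<bullet> c) / \<delta> - hb / (4 * \<delta> ^ 3) * gwp_affine \<delta> q c x + V' x / hb) (at 0)"
proof -
  have "(\<lambda>r. Im (gwp_residual_factor \<delta> hb V q p \<theta>d qd pd (x + r *\<^sub>R c)))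
      = (\<lambda>r. \<theta>d + (pd \<bullet> (x - \<delta> *\<^sub>R q) + r * (pd \<bullet> c) - \<delta> * (p \<bullet> qd)) / \<delta>
          - (hb / 2) * (((norm (x - (2 * \<delta>) *\<^sub>R q))\<^sup>2 + 2 * r * ((x - (2 * \<delta>) *\<^sub>R q) \<bullet> c)
              + r\<^sup>2 * (c \<bullet> c)) / (4 * \<delta> ^ 4) - (norm p)\<^sup>2 / \<delta>\<^sup>2 - real DIM('a) / (2 * \<delta>\<^sup>2))
          + V (x + r *\<^sub>R c) / hb)"
    unfolding Im_gwp_residual_factor power2_norm_add_scaleR_diff by (simp add: inner_simps algebra_simps)
  then show ?thesis using assms
    by (simp only:) (auto intro!: derivative_eq_intros simp: gwp_affine_def field_simps power2_eq_square
        power3_eq_cube power4_eq_xxxx)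
qed

lemma gwp_residual_orthogonal_imp_momentum_eq:
  fixes V V' :: "'a::euclidean_space \<Rightarrow> real"
  assumes "\<delta> \<noteq> 0" "hb \<noteq> 0" "continuous_on UNIV V" "continuous_on UNIV V'"
    and V_deriv: "\<And>x. ((\<lambda>r. V (x + r *\<^sub>R c)) has_real_derivative V' x) (at 0)"
    and V_int: "integrable lborel (\<lambda>x. (V x)\<^sup>2 * gwp_density \<delta> q x)"
      "integrable lborel (\<lambda>x. V' x * gwp_density \<delta> q x)"
    and orthogonal: "(\<integral>x. of_real (gwp_affine \<delta> q c x * gwp_density \<delta> q x)
                        * gwp_residual_factor \<delta> hb V q p \<theta>d qd pd x \<partial>lborel) = 0"
  shows "pd \<bullet> c = - (\<delta> / hb) * (\<integral>x. V' x * gwp_density \<delta> q x \<partial>lborel)"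
proof -
  let ?\<rho> = "gwp_density \<delta> q" and ?g = "gwp_affine \<delta> q c"
  let ?W = "gwp_residual_factor \<delta> hb V q p \<theta>d qd pd"
  define G' where "G' x = (pd \<bullet> c) / \<delta> + (- hb / (4 * \<delta> ^ 3)) * ?g x + V' x / hb" for x
  have V'_int: "integrable lborel (\<lambda>x. V' x / hb * ?\<rho> x)"
    using integrable_divide[OF V_int(2), of hb] by (simp add: field_simps)
  have moment_int: "integrable lborel (\<lambda>x. h x * Im (?W x) * ?\<rho> x)"
    if "poly_bounded ((2 * \<delta>) *\<^sub>R q) h" "continuous_on UNIV h" for h
    using integrable_Im[OF integrable_gwp_residual_moment[OF assms(1,3) V_int(1) that]]
    by (simp add: mult_ac)
  have "((\<lambda>r. Im (?W (x + r *\<^sub>R c))) has_real_derivative G' x) (at 0)" for x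
    using Im_gwp_residual_factor_has_directional_derivative[where V' = V' and x = x, OF assms(1,2) V_deriv]
    unfolding G'_def by simp
  moreover have "continuous_on UNIV G'"
    unfolding G'_def[abs_def] divide_inverse by (intro continuous_intros continuous_on_gwp_affine assms(4))
  moreover have "integrable lborel (\<lambda>x. G' x * ?\<rho> x)"
    unfolding G'_def by (rule integrable_affine_plus_mult_gwp_density[OF assms(1) V'_int])
  ultimately have "(\<integral>x. G' x * ?\<rho> x \<partial>lborel) = (\<integral>x. ?g x * Im (?W x) * ?\<rho> x \<partial>lborel) / \<delta>"
    using moment_int[OF poly_bounded_const continuous_on_const, of 1]
    by (intro gwp_density_integration_by_parts assms(1) moment_int poly_bounded_gwp_affine
        continuous_on_gwp_affine continuous_on_Im continuous_on_gwp_residual_factor assms(3)) simp_all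
  also have "(\<integral>x. ?g x * Im (?W x) * ?\<rho> x \<partial>lborel) = Im (\<integral>x. of_real (?g x * ?\<rho> x) * ?W x \<partial>lborel)"
    using integral_Im[OF integrable_gwp_residual_moment[OF assms(1,3) V_int(1) poly_bounded_gwp_affine
          continuous_on_gwp_affine]]
    by (simp add: mult_ac)
  finally have "(pd \<bullet> c) / \<delta> + (\<integral>x. V' x / hb * ?\<rho> x \<partial>lborel) = 0"
    unfolding orthogonal G'_def integral_affine_plus_mult_gwp_density[OF assms(1) V'_int] by simp
  then show ?thesis using assms(1,2) by (simp add: field_simps)
qed

lemma smooth_fun_continuous: "smooth_fun V \<Longrightarrow> continuous_on UNIV V"
  unfolding smooth_fun_def by (metis dirderivs.simps(1) empty_subsetI list.set(1))

lemma smooth_fun_continuous_dirderiv: "smooth_fun V \<Longrightarrow> b \<in> Basis \<Longrightarrow> continuous_on UNIV (dirderiv b V)"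
  unfolding smooth_fun_def by (metis dirderivs.simps empty_set empty_subsetI insert_subset list.set(2))

lemma smooth_fun_has_dirderiv:
  assumes "smooth_fun V" "b \<in> Basis"
  shows "((\<lambda>r. V (x + r *\<^sub>R b)) has_real_derivative dirderiv b V x) (at 0)"
proof -
  have "(\<lambda>r. V (x + r *\<^sub>R b)) differentiable (at 0)"
    using assms unfolding smooth_fun_def by (metis dirderivs.simps(1) empty_set empty_subsetI)
  then show ?thesis
    unfolding dirderiv_def has_real_derivative_iff_has_vector_derivative by (rule vector_derivative_works[THEN iffD1])
qed

theorem corollary7p7:
  fixes \<delta> hb :: real and V :: "'a::euclidean_space \<Rightarrow> real" and I :: "real set"
    and \<theta> :: "real \<Rightarrow> real" and q p :: "real \<Rightarrow> 'a"
  assumes "\<delta> > 0" and "hb > 0"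
    and "smooth_fun V"
    and "open I"
    and "\<theta> C1_differentiable_on I" and "q C1_differentiable_on I" and "p C1_differentiable_on I"
    and "\<And>t b. t \<in> I \<Longrightarrow> b \<in> Basis \<Longrightarrow>
           integrable lborel (\<lambda>x. cnj (gwp_curve \<delta> \<theta> q p t x)
              * (complex_of_real (dirderiv b V x) * gwp_curve \<delta> \<theta> q p t x))"
    and "McLachlan_sol \<delta> hb V I \<theta> q p \<or> KS_sol \<delta> hb V I \<theta> q p"
    and "t \<in> I"
  shows "vector_derivative q (at t) = (hb / (2 * \<delta>\<^sup>2)) *\<^sub>R p t
         \<and> (\<forall>b\<in>Basis.
           complex_of_real (vector_derivative p (at t) \<bullet> b)
           = - complex_of_real (\<delta> / hb) *
               l2_inner (gwp_curve \<delta> \<theta> q p t)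
                        (\<lambda>x. complex_of_real (dirderiv b V x) * gwp_curve \<delta> \<theta> q p t x))"
proof -
  have \<delta>: "\<delta> \<noteq> 0" and hb: "hb \<noteq> 0" using assms(1,2) by auto
  note V_cont = smooth_fun_continuous[OF assms(3)]
  obtain \<theta>d qd pd where \<theta>d: "(\<theta> has_real_derivative \<theta>d) (at t)"
    and qd: "(q has_vector_derivative qd) (at t)" and pd: "(p has_vector_derivative pd) (at t)"
    using assms(5-7,10)
    by (metis C1_differentiable_on_def has_real_derivative_iff_has_vector_derivative)
  have orthogonal: "\<And>A. (\<integral>x. of_real (gwp_affine \<delta> (q t) A x * gwp_density \<delta> (q t) x)
      * gwp_residual_factor \<delta> hb V (q t) (p t) \<theta>d qd pd x \<partial>lborel) = 0"
    by (rule gwp_solution_residual_orthogonal[OF \<delta> hb assms(9,10) \<theta>d qd pd])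
  have "in_dom_H hb V (gwp \<delta> (\<theta> t) (q t) (p t))"
    using assms(9,10) unfolding McLachlan_sol_def KS_sol_def gwp_curve_def by blast
  then have V_int: "integrable lborel (\<lambda>x. (V x)\<^sup>2 * gwp_density \<delta> (q t) x)"
    by (rule integrable_potential_square_gwp_density[OF \<delta> V_cont])
  have velocity: "qd = (hb / (2 * \<delta>\<^sup>2)) *\<^sub>R p t"
    by (rule gwp_residual_orthogonal_imp_velocity_eq[OF \<delta> V_cont V_int orthogonal])
  have momentum: "pd \<bullet> b = - (\<delta> / hb) * (\<integral>x. dirderiv b V x * gwp_density \<delta> (q t) x \<partial>lborel)"
    if b: "b \<in> Basis" for b
  proof (rule gwp_residual_orthogonal_imp_momentum_eq[OF \<delta> hb V_cont
        smooth_fun_continuous_dirderiv[OF assms(3) b] smooth_fun_has_dirderiv[OF assms(3) b] V_int _ orthogonal])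
    show "integrable lborel (\<lambda>x. dirderiv b V x * gwp_density \<delta> (q t) x)"
      using assms(8)[OF assms(10) b]
      unfolding gwp_curve_def cnj_gwp_mult_of_real_mult_gwp complex_of_real_integrable_eq .
  qed
  show ?thesis
    unfolding gwp_curve_def l2_inner_gwp_mult_of_real vector_derivative_at[OF qd] vector_derivative_at[OF pd]
    using velocity momentum by simp
qed

end
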